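(* Let $\phi$ and $\psi$ be Drinfeld modules over $K$ with $\operatorname{rk}\phi>\operatorname{rk}\psi$, and put $n=\operatorname{rk}\phi$. Let $K\{\tau\}_{<n}=\{w\in K\{\tau\}\mid \deg_\tau w<n\}$. Then there is an $\mathbb F_q$-linear isomorphism $\operatorname{Ext}^1_\tau(\phi,\psi)\cong K\{\tau\}_{<n}$; namely, the map sending $w\in K\{\tau\}_{<n}$ to the class of the biderivation $\delta$ with $\delta(t)=w$ is an isomorphism of $\mathbb F_q$-vector spaces $K\{\tau\}_{<n}\to \mathrm{Der}(\phi,\psi)/\mathrm{Der}_{in}(\phi,\psi)$.
   Context: Let $q$ be a power of a prime $p$, $A=\mathbb F_q[t]$, and $K$ a field of characteristic $p$ with an $\mathbb F_q$-algebra homomorphism $\iota:A\to K$; put $\theta=\iota(t)$. $K\{\tau\}$ is the ring of twisted polynomials $\sum_i a_i\tau^i$ ($a_i\in K$) with $\tau x=x^q\tau$; write $c^{(i)}=c^{q^i}$. A $\mathbf t$-module of dimension $d$ over $K$ is an $\mathbb F_q$-algebra homomorphism $\Phi:\mathbb F_q[t]\to \mathrm{Mat}_d(K\{\tau\})$ with $\Phi_t:=\Phi(t)=(\theta I_d+N)+M_1\tau+\dots+M_r\tau^r$, $N$ nilpotent, $M_i\in\mathrm{Mat}_d(K)$; its rank $\operatorname{rk}\Phi$ is the $\tau$-degree of $\Phi_t$. A Drinfeld module is a $\mathbf t$-module of dimension $1$, i.e. $\phi_t=\theta+\sum_{i=1}^n a_i\tau^i$. For $\mathbf t$-modules $\Phi$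 (dimension $d$) and $\Psi$ (dimension $e$), $\mathrm{Der}(\Phi,\Psi)$ is the $\mathbb F_q$-space of $\mathbb F_q$-linear maps $\delta:\mathbb F_q[t]\to\mathrm{Mat}_{e\times d}(K\{\tau\})$ with $\delta(ab)=\Psi_a\delta(b)+\delta(a)\Phi_b$; such $\delta$ is determined by $\delta(t)$, and every value of $\delta(t)$ occurs. The inner biderivations $\mathrm{Der}_{in}(\Phi,\Psi)$ are those of the form $\delta^{(U)}(a)=U\Phi_a-\Psi_aU$ with $U\in\mathrm{Mat}_{e\times d}(K\{\tau\})$. $\operatorname{Ext}^1_\tau(\Phi,\Psi)$ (the group of extensions $0\to\Psi\to X\to\Phi\to0$ of $\mathbf t$-modules with Baer sum) is identified with $\mathrm{Der}(\Phi,\Psi)/\mathrm{Der}_{in}(\Phi,\Psi)$, the class of $\delta$ corresponding to the extension with middle term $X_t=\begin{bmatrix}\Phi_t&0\\ \delta(t)&\Psi_t\end{bmatrix}$; its $\mathbb F_q[t]$-module structure is $a*[\delta]=[\Psi_a\delta]$. *)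

theory Defs
  imports "HOL-Computational_Algebra.Polynomial"
begin

text \<open>Twisted polynomials K{tau} are represented by their coefficient sequences,
  i.e. by elements of 'k poly: the polynomial f represents sum_i coeff f i tau^i.
  Addition is polynomial addition; multiplication is the twisted product
  (a tau^i)(b tau^j) = a b^(q^i) tau^(i+j).\<close>

definition tmult :: "nat \<Rightarrow> 'k::field poly \<Rightarrow> 'k poly \<Rightarrow> 'k poly" where
  "tmult q f g = (\<Sum>i\<le>degree f. \<Sum>j\<le>degree g.
       monom (coeff f i * coeff g j ^ (q ^ i)) (i + j))"

primrec tpow :: "nat \<Rightarrow> 'k::field poly \<Rightarrow> nat \<Rightarrow> 'k poly" where
  "tpow q f 0 = 1"
| "tpow q f (Suc k) = tmult q (tpow q f k) f"

text \<open>The copy of F_q inside K (the fixed points of Frobenius x \<mapsto> x^q).\<close>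
definition Fq :: "nat \<Rightarrow> 'k::field set" where
  "Fq q = {x. x ^ q = x}"

text \<open>A = F_q[t], as polynomials over K with all coefficients in F_q.\<close>
definition Apoly :: "nat \<Rightarrow> 'k::field poly set" where
  "Apoly q = {a. \<forall>i. coeff a i \<in> Fq q}"

definition tvar :: "'k::field poly" where
  "tvar = [:0, 1:]"

text \<open>A Drinfeld module over K (with theta = iota(t)) is given by phi_t =
  theta + a_1 tau + ... + a_n tau^n; we identify it with phi_t.\<close>
definition drinfeld_module :: "'k::field \<Rightarrow> 'k poly \<Rightarrow> bool" where
  "drinfeld_module \<theta> phit \<longleftrightarrow> coeff phit 0 = \<theta>"

definition dm_eval :: "nat \<Rightarrow> 'k::field poly \<Rightarrow> 'k poly \<Rightarrow> 'k poly" where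
  "dm_eval q phit a = (\<Sum>i\<le>degree a. smult (coeff a i) (tpow q phit i))"

definition Der :: "nat \<Rightarrow> 'k::field poly \<Rightarrow> 'k poly \<Rightarrow> ('k poly \<Rightarrow> 'k poly) set" where
  "Der q phit psit = {\<delta>.
     (\<forall>a. a \<notin> Apoly q \<longrightarrow> \<delta> a = 0) \<and>
     (\<forall>a\<in>Apoly q. \<forall>b\<in>Apoly q. \<delta> (a + b) = \<delta> a + \<delta> b) \<and>
     (\<forall>c\<in>Fq q. \<forall>a\<in>Apoly q. \<delta> (smult c a) = smult c (\<delta> a)) \<and>
     (\<forall>a\<in>Apoly q. \<forall>b\<in>Apoly q.
        \<delta> (a * b) = tmult q (dm_eval q psit a) (\<delta> b) + tmult q (\<delta> a) (dm_eval q phit b))}"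

definition Der_in :: "nat \<Rightarrow> 'k::field poly \<Rightarrow> 'k poly \<Rightarrow> ('k poly \<Rightarrow> 'k poly) set" where
  "Der_in q phit psit = {\<delta>. \<exists>U. \<delta> = (\<lambda>a. if a \<in> Apoly q
       then tmult q U (dm_eval q phit a) - tmult q (dm_eval q psit a) U else 0)}"

definition ext_rel :: "nat \<Rightarrow> 'k::field poly \<Rightarrow> 'k poly \<Rightarrow>
    (('k poly \<Rightarrow> 'k poly) \<times> ('k poly \<Rightarrow> 'k poly)) set" where
  "ext_rel q phit psit = {(\<delta>1, \<delta>2). \<delta>1 \<in> Der q phit psit \<and> \<delta>2 \<in> Der q phit psit \<and>
      (\<lambda>a. \<delta>1 a - \<delta>2 a) \<in> Der_in q phit psit}"

definition Ext1 :: "nat \<Rightarrow> 'k::field poly \<Rightarrow> 'k poly \<Rightarrow> ('k poly \<Rightarrow> 'k poly) set set" where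
  "Ext1 q phit psit = Der q phit psit // ext_rel q phit psit"

definition ext_class :: "nat \<Rightarrow> 'k::field poly \<Rightarrow> 'k poly \<Rightarrow> 'k poly \<Rightarrow> ('k poly \<Rightarrow> 'k poly) set" where
  "ext_class q phit psit w = {\<delta> \<in> Der q phit psit. \<exists>\<delta>0 \<in> Der q phit psit.
      \<delta>0 tvar = w \<and> (\<delta>, \<delta>0) \<in> ext_rel q phit psit}"

end

theory Submission
  imports Defs "HOL-Computational_Algebra.Primes"
begin

text \<open>A biderivation is determined by its value at t, and every value occurs; the inner
  biderivation of U takes the value U phi_t - psi_t U at t. Since deg psi_t < deg phi_t = n,
  the leading term of U phi_t - psi_t U is that of U phi_t, of degree deg U + n. Hence
  U \<mapsto> U phi_t - psi_t U can be divided by like a polynomial with invertible leading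
  coefficient: every w is congruent modulo its image to exactly one remainder of degree < n.\<close>

text \<open>twist (q^i) g is the Frobenius twist g^(i), so that tau^i g = g^(i) tau^i.\<close>

definition twist :: "nat \<Rightarrow> 'k::field poly \<Rightarrow> 'k poly" where
  "twist k g = map_poly (\<lambda>x. x ^ k) g"

lemma coeff_twist: "k > 0 \<Longrightarrow> coeff (twist k g) j = coeff g j ^ k"
  unfolding twist_def by (simp add: coeff_map_poly)

lemma degree_twist_le: "k > 0 \<Longrightarrow> degree (twist k g) \<le> degree g"
  by (rule degree_le) (auto simp: coeff_twist coeff_eq_0 zero_power)

lemma twist_pCons: "k > 0 \<Longrightarrow> twist k (pCons a g) = pCons (a ^ k) (twist k g)"
  unfolding twist_def by (simp add: map_poly_pCons)

lemma twist_twist: "k > 0 \<Longrightarrow> m > 0 \<Longrightarrow> twist k (twist m g) = twist (m * k) g"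
  unfolding twist_def by (simp add: map_poly_map_poly o_def power_mult)

lemma tmult_eq_sum_twist:
  assumes "q > 0" "degree f \<le> N"
  shows "tmult q f g = (\<Sum>i\<le>N. monom (coeff f i) i * twist (q ^ i) g)"
proof -
  have "tmult q f g = (\<Sum>i\<le>degree f. monom (coeff f i) i * twist (q ^ i) g)"
    unfolding tmult_def
  proof (rule sum.cong[OF refl])
    fix i
    have qi: "q ^ i > 0" using assms by simp
    have "(\<Sum>j\<le>degree g. monom (coeff f i * coeff g j ^ q ^ i) (i + j))
        = monom (coeff f i) i * (\<Sum>j\<le>degree g. monom (coeff (twist (q ^ i) g) j) j)"
      by (simp add: mult_monom coeff_twist[OF qi] sum_distrib_left)
    also have "(\<Sum>j\<le>degree g. monom (coeff (twist (q ^ i) g) j) j) = twist (q ^ i) g"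
      by (rule poly_as_sum_of_monoms'[OF degree_twist_le[OF qi]])
    finally show "(\<Sum>j\<le>degree g. monom (coeff f i * coeff g j ^ q ^ i) (i + j))
        = monom (coeff f i) i * twist (q ^ i) g" .
  qed
  also have "\<dots> = (\<Sum>i\<le>N. monom (coeff f i) i * twist (q ^ i) g)"
    by (rule sum.mono_neutral_left) (use assms(2) in \<open>auto simp: coeff_eq_0\<close>)
  finally show ?thesis .
qed

lemma tmult_0_left [simp]: "tmult q 0 g = 0"
  by (simp add: tmult_def)

lemma tmult_pCons:
  assumes "q > 0"
  shows "tmult q (pCons a f) g = smult a g + tmult q f (pCons 0 (twist q g))"
proof -
  have "tmult q (pCons a f) g
      = (\<Sum>i\<le>Suc (degree f). monom (coeff (pCons a f) i) i * twist (q ^ i) g)"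
    by (rule tmult_eq_sum_twist[OF assms]) (simp add: degree_pCons_le)
  also have "\<dots> = monom a 0 * twist 1 g
      + (\<Sum>i\<le>degree f. monom (coeff f i) (Suc i) * twist (q ^ Suc i) g)"
    by (subst sum.atMost_Suc_shift) simp
  also have "monom a 0 * twist 1 g = smult a g"
    by (simp add: twist_def monom_0)
  also have "(\<Sum>i\<le>degree f. monom (coeff f i) (Suc i) * twist (q ^ Suc i) g)
      = tmult q f (pCons 0 (twist q g))"
    unfolding tmult_eq_sum_twist[OF assms order_refl]
  proof (rule sum.cong[OF refl])
    fix i
    have "twist (q ^ i) (pCons 0 (twist q g)) = pCons 0 (twist (q ^ Suc i) g)"
      using assms by (simp add: twist_pCons twist_twist mult.commute)
    then show "monom (coeff f i) (Suc i) * twist (q ^ Suc i) g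
        = monom (coeff f i) i * twist (q ^ i) (pCons 0 (twist q g))"
      by (simp add: monom_Suc)
  qed
  finally show ?thesis .
qed

lemma coeff_tmult:
  assumes "q > 0"
  shows "coeff (tmult q f g) n
    = (\<Sum>i\<le>degree f. if n < i then 0 else coeff f i * coeff g (n - i) ^ (q ^ i))"
  unfolding tmult_eq_sum_twist[OF assms order_refl] coeff_sum coeff_monom_mult using assms
  by (intro sum.cong refl) (simp add: coeff_twist)

lemma degree_tmult_le: "q > 0 \<Longrightarrow> degree (tmult q f g) \<le> degree f + degree g"
  by (rule degree_le) (auto simp: coeff_tmult coeff_eq_0 intro!: sum.neutral)

lemma coeff_tmult_degree_add:
  assumes "q > 0"
  shows "coeff (tmult q f g) (degree f + degree g) = lead_coeff f * lead_coeff g ^ (q ^ degree f)"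
proof -
  have "coeff (tmult q f g) (degree f + degree g)
      = (\<Sum>i\<le>degree f. if i = degree f then lead_coeff f * lead_coeff g ^ (q ^ degree f) else 0)"
    unfolding coeff_tmult[OF assms]
  proof (rule sum.cong[OF refl])
    fix i
    assume "i \<in> {..degree f}"
    then have "i \<noteq> degree f \<Longrightarrow> coeff g (degree f + degree g - i) = 0"
      by (intro coeff_eq_0) auto
    then show "(if degree f + degree g < i then 0
          else coeff f i * coeff g (degree f + degree g - i) ^ q ^ i)
        = (if i = degree f then lead_coeff f * lead_coeff g ^ q ^ degree f else 0)"
      using assms by auto
  qed
  then show ?thesis
    by simp
qed

lemma smult_sum_right: "smult c (\<Sum>i\<in>S. f i) = (\<Sum>i\<in>S. smult c (f i))"
  by (induct S rule: infinite_finite_induct) (simp_all add: smult_add_right)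

definition lin_ext :: "(nat \<Rightarrow> 'k::field poly) \<Rightarrow> 'k poly \<Rightarrow> 'k poly" where
  "lin_ext D a = (\<Sum>i\<le>degree a. smult (coeff a i) (D i))"

lemma lin_ext_eq_sum: "degree a \<le> N \<Longrightarrow> lin_ext D a = (\<Sum>i\<le>N. smult (coeff a i) (D i))"
  unfolding lin_ext_def by (rule sum.mono_neutral_left) (auto simp: coeff_eq_0)

lemma lin_ext_0 [simp]: "lin_ext D 0 = 0"
  by (simp add: lin_ext_def)

lemma lin_ext_1: "lin_ext D 1 = D 0"
  by (simp add: lin_ext_def)

lemma lin_ext_add: "lin_ext D (a + b) = lin_ext D a + lin_ext D b"
proof -
  let ?N = "max (degree a) (degree b)"
  have "degree (a + b) \<le> ?N"
    by (rule degree_add_le) auto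
  then show ?thesis
    by (simp add: lin_ext_eq_sum[of "a + b" ?N] lin_ext_eq_sum[of a ?N] lin_ext_eq_sum[of b ?N]
        smult_add_left sum.distrib)
qed

lemma lin_ext_smult: "lin_ext D (smult c a) = smult c (lin_ext D a)"
  by (simp add: lin_ext_eq_sum[of "smult c a" "degree a"] lin_ext_def smult_sum_right)

lemma lin_ext_pCons: "lin_ext D (pCons c a) = smult c (D 0) + lin_ext (\<lambda>i. D (Suc i)) a"
proof -
  have "lin_ext D (pCons c a) = (\<Sum>i\<le>Suc (degree a). smult (coeff (pCons c a) i) (D i))"
    by (rule lin_ext_eq_sum) (simp add: degree_pCons_le)
  also have "\<dots> = smult c (D 0) + lin_ext (\<lambda>i. D (Suc i)) a"
    by (subst sum.atMost_Suc_shift) (simp add: lin_ext_def)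
  finally show ?thesis .
qed

lemma lin_ext_add_fun: "lin_ext (\<lambda>i. D i + E i) a = lin_ext D a + lin_ext E a"
  by (simp add: lin_ext_def smult_add_right sum.distrib)

lemma dm_eval_eq_lin_ext: "dm_eval q phit a = lin_ext (tpow q phit) a"
  by (simp add: dm_eval_def lin_ext_def)

lemma Fq_mult: "x \<in> Fq q \<Longrightarrow> y \<in> Fq q \<Longrightarrow> x * y \<in> Fq q"
  by (simp add: Fq_def power_mult_distrib)

lemma Apoly_pCons: "pCons c a \<in> Apoly q \<longleftrightarrow> c \<in> Fq q \<and> a \<in> Apoly q"
  unfolding Apoly_def by (auto simp: coeff_pCons split: nat.splits)

lemma Apoly_smult: "c \<in> Fq q \<Longrightarrow> a \<in> Apoly q \<Longrightarrow> smult c a \<in> Apoly q"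
  by (simp add: Apoly_def Fq_mult)

lemma Apoly_induct [consumes 1, case_names 0 pCons]:
  assumes "a \<in> Apoly q" "P 0"
    "\<And>c a. c \<in> Fq q \<Longrightarrow> a \<in> Apoly q \<Longrightarrow> P a \<Longrightarrow> P (pCons c a)"
  shows "P a"
  using assms(1) by (induct a) (auto simp: Apoly_pCons assms(2,3))

lemma dm_eval_0 [simp]: "dm_eval q phit 0 = 0"
  by (simp add: dm_eval_def)

lemma dm_eval_1 [simp]: "dm_eval q phit 1 = 1"
  by (simp add: dm_eval_def)

lemma DerD:
  assumes "\<delta> \<in> Der q phit psit"
  shows "\<And>a. a \<notin> Apoly q \<Longrightarrow> \<delta> a = 0"
    and "\<And>a b. a \<in> Apoly q \<Longrightarrow> b \<in> Apoly q \<Longrightarrow> \<delta> (a + b) = \<delta> a + \<delta> b"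
    and "\<And>c a. c \<in> Fq q \<Longrightarrow> a \<in> Apoly q \<Longrightarrow> \<delta> (smult c a) = smult c (\<delta> a)"
    and "\<And>a b. a \<in> Apoly q \<Longrightarrow> b \<in> Apoly q \<Longrightarrow>
      \<delta> (a * b) = tmult q (dm_eval q psit a) (\<delta> b) + tmult q (\<delta> a) (dm_eval q phit b)"
  using assms unfolding Der_def by auto

definition inner_at_t :: "nat \<Rightarrow> 'k::field poly \<Rightarrow> 'k poly \<Rightarrow> 'k poly \<Rightarrow> 'k poly" where
  "inner_at_t q phit psit U = tmult q U phit - tmult q psit U"

lemma coeff_inner_at_t_top:
  assumes "q > 0" "degree psit < degree phit"
  shows "coeff (inner_at_t q phit psit U) (degree U + degree phit)
    = lead_coeff U * lead_coeff phit ^ (q ^ degree U)"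
proof -
  have "degree (tmult q psit U) < degree U + degree phit"
    using degree_tmult_le[OF assms(1), of psit U] assms(2) by simp
  then show ?thesis
    by (simp add: inner_at_t_def coeff_tmult_degree_add[OF assms(1)] coeff_eq_0)
qed

lemma degree_inner_at_t:
  assumes "q > 0" "degree psit < degree phit" "U \<noteq> 0"
  shows "degree (inner_at_t q phit psit U) = degree U + degree phit"
proof (rule antisym)
  show "degree (inner_at_t q phit psit U) \<le> degree U + degree phit"
    unfolding inner_at_t_def
    using degree_tmult_le[OF assms(1), of U phit] degree_tmult_le[OF assms(1), of psit U] assms(2)
    by (intro degree_diff_le) auto
  have "phit \<noteq> 0"
    using assms(2) by auto
  then show "degree U + degree phit \<le> degree (inner_at_t q phit psit U)"
    using assms(3) by (intro le_degree) (simp add: coeff_inner_at_t_top[OF assms(1,2)])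
qed

text \<open>The values delta(t^i) of the biderivation with delta(t) = w, forced by the Leibniz rule
  delta(t * t^i) = psi_t delta(t^i) + delta(t) phi_t^i.\<close>

primrec bider_at_pow :: "nat \<Rightarrow> 'k::field poly \<Rightarrow> 'k poly \<Rightarrow> 'k poly \<Rightarrow> nat \<Rightarrow> 'k poly" where
  "bider_at_pow q phit psit w 0 = 0"
| "bider_at_pow q phit psit w (Suc i) =
     tmult q psit (bider_at_pow q phit psit w i) + tmult q w (tpow q phit i)"

definition bider_of :: "nat \<Rightarrow> 'k::field poly \<Rightarrow> 'k poly \<Rightarrow> 'k poly \<Rightarrow> 'k poly \<Rightarrow> 'k poly" where
  "bider_of q phit psit w a = (if a \<in> Apoly q then lin_ext (bider_at_pow q phit psit w) a else 0)"

context
  fixes q :: nat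
  assumes power_q_add: "\<And>x y :: 'k::field. (x + y) ^ q = x ^ q + y ^ q"
begin

lemma q_pos: "q > 0"
proof (rule ccontr)
  assume "\<not> q > 0"
  then have "(1 :: 'k) = 1 + 1"
    using power_q_add[of 1 1] by simp
  then show False
    by (metis add_cancel_right_right one_neq_zero)
qed

lemma zero_power_q [simp]: "(0::'k) ^ q = 0"
  using q_pos by simp

lemma twist_0 [simp]: "twist q (0 :: 'k poly) = 0"
  by (rule poly_eqI) (simp add: coeff_twist q_pos)

lemma twist_add: "twist q (f + g :: 'k poly) = twist q f + twist q g"
  by (rule poly_eqI) (simp add: coeff_twist q_pos power_q_add)

lemma twist_smult: "twist q (smult c g :: 'k poly) = smult (c ^ q) (twist q g)"
  by (rule poly_eqI) (simp add: coeff_twist q_pos power_mult_distrib)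

lemma tmult_pCons_0_right: "tmult q f (pCons 0 g :: 'k poly) = pCons 0 (tmult q f g)"
  by (induct f arbitrary: g) (simp_all add: tmult_pCons q_pos twist_pCons)

lemma tmult_0_right [simp]: "tmult q f (0 :: 'k poly) = 0"
  by (induct f) (simp_all add: tmult_pCons q_pos)

lemma tmult_add_right: "tmult q f (g + h :: 'k poly) = tmult q f g + tmult q f h"
  by (induct f arbitrary: g h)
    (simp_all add: tmult_pCons q_pos twist_add smult_add_right tmult_pCons_0_right algebra_simps)

lemma tmult_add_left: "tmult q (f + g) (h :: 'k poly) = tmult q f h + tmult q g h"
proof (induct f arbitrary: g h)
  case 0
  then show ?case by simp
next
  case (pCons a f)
  obtain b g' where "g = pCons b g'"
    by (cases g) auto
  then show ?case
    by (simp add: tmult_pCons q_pos pCons smult_add_left algebra_simps)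
qed

lemma tmult_smult_left: "tmult q (smult c f) (g :: 'k poly) = smult c (tmult q f g)"
  by (induct f arbitrary: g) (simp_all add: tmult_pCons q_pos smult_add_right)

lemma tmult_smult_right:
  "c ^ q = c \<Longrightarrow> tmult q f (smult c g :: 'k poly) = smult c (tmult q f g)"
  by (induct f arbitrary: g)
    (simp_all add: tmult_pCons q_pos smult_add_right twist_smult mult.commute tmult_pCons_0_right)

lemma tmult_minus_right: "tmult q f (- g :: 'k poly) = - tmult q f g"
  using tmult_add_right[of f g "- g"] by (simp add: add.inverse_unique)

lemma tmult_minus_left: "tmult q (- f) (g :: 'k poly) = - tmult q f g"
  using tmult_add_left[of f "- f" g] by (simp add: add.inverse_unique)

lemma tmult_diff_right: "tmult q f (g - h :: 'k poly) = tmult q f g - tmult q f h"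
  using tmult_add_right[of f g "- h"] by (simp add: tmult_minus_right)

lemma tmult_diff_left: "tmult q (f - g) (h :: 'k poly) = tmult q f h - tmult q g h"
  using tmult_add_left[of f "- g" h] by (simp add: tmult_minus_left)

lemma twist_1_poly [simp]: "twist q (1 :: 'k poly) = 1"
  by (rule poly_eqI) (simp add: coeff_twist q_pos coeff_1)

lemma tmult_1_right [simp]: "tmult q f (1 :: 'k poly) = f"
  by (induct f) (simp_all add: tmult_pCons q_pos tmult_pCons_0_right)

lemma tmult_1_left [simp]: "tmult q 1 (g :: 'k poly) = g"
  by (simp add: one_pCons tmult_pCons q_pos)

lemma tmult_const_left [simp]: "tmult q [:c:] (g :: 'k poly) = smult c g"
  by (simp add: tmult_pCons q_pos)

lemma tmult_const_right: "c ^ q = c \<Longrightarrow> tmult q f [:c:] = smult c (f :: 'k poly)"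
  using tmult_smult_right[of c f 1] by simp

lemma twist_tmult: "twist q (tmult q g (h :: 'k poly)) = tmult q (twist q g) (twist q h)"
  by (induct g arbitrary: h) (simp_all add: tmult_pCons q_pos twist_pCons twist_add twist_smult)

lemma tmult_assoc: "tmult q (tmult q f g) (h :: 'k poly) = tmult q f (tmult q g h)"
proof (induct f arbitrary: g h)
  case 0
  then show ?case by simp
next
  case (pCons a f)
  have "tmult q (tmult q (pCons a f) g) h
      = smult a (tmult q g h) + tmult q (tmult q f (pCons 0 (twist q g))) h"
    by (simp add: tmult_pCons q_pos tmult_add_left tmult_smult_left)
  also have "tmult q (tmult q f (pCons 0 (twist q g))) h
      = tmult q f (tmult q (pCons 0 (twist q g)) h)"
    by (rule pCons(2))
  also have "tmult q (pCons 0 (twist q g)) h = pCons 0 (twist q (tmult q g h))"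
    by (simp add: tmult_pCons q_pos tmult_pCons_0_right twist_tmult)
  finally show ?case
    by (simp add: tmult_pCons q_pos)
qed

lemma tmult_sum_left: "tmult q (\<Sum>i\<in>I. f i) (g :: 'k poly) = (\<Sum>i\<in>I. tmult q (f i) g)"
  by (induct I rule: infinite_finite_induct) (simp_all add: tmult_add_left)

lemma tmult_sum_right: "tmult q g (\<Sum>i\<in>I. f i :: 'k poly) = (\<Sum>i\<in>I. tmult q g (f i))"
  by (induct I rule: infinite_finite_induct) (simp_all add: tmult_add_right)

lemma Fq_0 [simp]: "(0 :: 'k) \<in> Fq q"
  by (simp add: Fq_def)

lemma Fq_add: "x \<in> Fq q \<Longrightarrow> y \<in> Fq q \<Longrightarrow> (x + y :: 'k) \<in> Fq q"
  by (simp add: Fq_def power_q_add)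

lemma Fq_sum: "(\<And>i. i \<in> I \<Longrightarrow> f i \<in> Fq q) \<Longrightarrow> (\<Sum>i\<in>I. f i :: 'k) \<in> Fq q"
  by (induct I rule: infinite_finite_induct) (simp_all add: Fq_add)

lemma Apoly_0 [simp]: "(0 :: 'k poly) \<in> Apoly q"
  by (simp add: Apoly_def)

lemma Apoly_1 [simp]: "(1 :: 'k poly) \<in> Apoly q"
  by (simp add: Apoly_def coeff_1 Fq_def)

lemma Apoly_tvar [simp]: "(tvar :: 'k poly) \<in> Apoly q"
  by (simp add: Apoly_def tvar_def coeff_pCons Fq_def split: nat.splits)

lemma Apoly_add: "a \<in> Apoly q \<Longrightarrow> b \<in> Apoly q \<Longrightarrow> (a + b :: 'k poly) \<in> Apoly q"
  by (simp add: Apoly_def Fq_add)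

lemma Apoly_mult: "a \<in> Apoly q \<Longrightarrow> b \<in> Apoly q \<Longrightarrow> (a * b :: 'k poly) \<in> Apoly q"
  unfolding Apoly_def by (auto simp: coeff_mult intro!: Fq_sum Fq_mult)

lemma lin_ext_tmult_right: "lin_ext (\<lambda>i. tmult q (D i) g) a = tmult q (lin_ext D a) (g :: 'k poly)"
  by (simp add: lin_ext_def tmult_sum_left tmult_smult_left)

lemma lin_ext_tmult_left:
  "a \<in> Apoly q \<Longrightarrow> lin_ext (\<lambda>i. tmult q g (D i)) a = tmult q g (lin_ext D a :: 'k poly)"
  by (simp add: lin_ext_def tmult_sum_right tmult_smult_right Apoly_def Fq_def)

lemma dm_eval_pCons:
  "dm_eval q phit (pCons c a) = [:c:] + tmult q (dm_eval q phit a) (phit :: 'k poly)"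
  unfolding dm_eval_eq_lin_ext lin_ext_pCons by (simp add: lin_ext_tmult_right)

lemma dm_eval_add: "dm_eval q phit (a + b) = dm_eval q phit a + dm_eval q (phit :: 'k poly) b"
  unfolding dm_eval_eq_lin_ext by (rule lin_ext_add)

lemma dm_eval_smult: "dm_eval q phit (smult c a) = smult c (dm_eval q (phit :: 'k poly) a)"
  unfolding dm_eval_eq_lin_ext by (rule lin_ext_smult)

lemma dm_eval_tvar [simp]: "dm_eval q (phit :: 'k poly) tvar = phit"
  by (simp add: tvar_def dm_eval_pCons)

lemma dm_eval_commute:
  "a \<in> Apoly q \<Longrightarrow> tmult q phit (dm_eval q phit a) = tmult q (dm_eval q phit a) (phit :: 'k poly)"
proof (induct a rule: Apoly_induct)
  case 0
  then show ?case by simp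
next
  case (pCons c a)
  then have "c ^ q = c"
    by (simp add: Fq_def)
  with pCons(3) show ?case
    by (simp add: dm_eval_pCons tmult_add_right tmult_add_left tmult_const_right
        tmult_assoc[symmetric])
qed

lemma dm_eval_mult:
  "b \<in> Apoly q \<Longrightarrow> dm_eval q phit (a * b) = tmult q (dm_eval q phit a) (dm_eval q (phit :: 'k poly) b)"
proof (induct a)
  case 0
  then show ?case by simp
next
  case (pCons c a)
  then show ?case
    by (simp add: dm_eval_add dm_eval_smult dm_eval_pCons tmult_add_left tmult_smult_left
        tmult_assoc dm_eval_commute)
qed

lemma Der_smult_add:
  assumes "c \<in> Fq q" "\<delta>1 \<in> Der q phit (psit :: 'k poly)" "\<delta>2 \<in> Der q phit psit"
  shows "(\<lambda>a. smult c (\<delta>1 a) + \<delta>2 a) \<in> Der q phit psit"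
proof -
  have "c ^ q = c"
    using assms(1) by (simp add: Fq_def)
  then show ?thesis
    using DerD[OF assms(2)] DerD[OF assms(3)] unfolding Der_def
    by (auto simp: smult_add_right tmult_add_right tmult_add_left tmult_smult_left
        tmult_smult_right algebra_simps)
qed

lemma Der_diff:
  assumes "\<delta>1 \<in> Der q phit (psit :: 'k poly)" "\<delta>2 \<in> Der q phit psit"
  shows "(\<lambda>a. \<delta>1 a - \<delta>2 a) \<in> Der q phit psit"
  using DerD[OF assms(1)] DerD[OF assms(2)] unfolding Der_def
  by (auto simp: smult_diff_right tmult_diff_right tmult_diff_left)

lemma Der_eq_zero:
  assumes "\<delta> \<in> Der q phit (psit :: 'k poly)" "\<delta> tvar = 0"
  shows "\<delta> a = 0"
proof (cases "a \<in> Apoly q")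
  case False
  then show ?thesis
    using DerD(1)[OF assms(1)] by simp
next
  case True
  have "\<delta> 1 = \<delta> 1 + \<delta> 1"
    using DerD(4)[OF assms(1), of 1 1] by simp
  then have \<delta>_1: "\<delta> 1 = 0"
    by (metis add_cancel_left_right)
  from True show ?thesis
  proof (induct a rule: Apoly_induct)
    case 0
    show ?case
      using DerD(3)[OF assms(1), of 0 0] by simp
  next
    case (pCons c a)
    have "pCons c a = smult c 1 + a * tvar"
      by (simp add: tvar_def)
    then have "\<delta> (pCons c a) = \<delta> (smult c 1) + \<delta> (a * tvar)"
      using pCons(1,2) by (simp only: DerD(2)[OF assms(1)] Apoly_smult Apoly_mult Apoly_1 Apoly_tvar)
    also have "\<dots> = smult c (\<delta> 1)
        + tmult q (dm_eval q psit a) (\<delta> tvar) + tmult q (\<delta> a) (dm_eval q phit tvar)"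
      using pCons(1,2) by (simp only: DerD(3,4)[OF assms(1)] Apoly_1 Apoly_tvar add.assoc)
    also have "\<dots> = 0"
      using pCons(3) by (simp add: \<delta>_1 assms(2))
    finally show ?case .
  qed
qed

lemma Der_eqI:
  assumes "\<delta>1 \<in> Der q phit (psit :: 'k poly)" "\<delta>2 \<in> Der q phit psit" "\<delta>1 tvar = \<delta>2 tvar"
  shows "\<delta>1 = \<delta>2"
proof
  fix a
  have "(\<lambda>a. \<delta>1 a - \<delta>2 a) a = 0"
    by (rule Der_eq_zero[OF Der_diff[OF assms(1,2)]]) (simp add: assms(3))
  then show "\<delta>1 a = \<delta>2 a"
    by simp
qed

lemma Der_in_subset_Der: "Der_in q phit psit \<subseteq> Der q phit (psit :: 'k poly)"
proof -
  have "tmult q U (smult c X) = smult c (tmult q U X)" if "c \<in> Fq q" for c and U X :: "'k poly"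
    using that by (intro tmult_smult_right) (simp add: Fq_def)
  then show ?thesis
    unfolding Der_in_def Der_def
    by (auto simp: Apoly_add Apoly_smult Apoly_mult dm_eval_add dm_eval_smult dm_eval_mult
        tmult_add_right tmult_add_left tmult_diff_right tmult_diff_left tmult_smult_left
        tmult_assoc smult_diff_right)
qed

lemma lin_ext_bider_at_pow_pCons:
  assumes "a \<in> Apoly q"
  shows "lin_ext (bider_at_pow q phit psit w) (pCons c a)
    = tmult q psit (lin_ext (bider_at_pow q phit psit w) a) + tmult q w (dm_eval q (phit :: 'k poly) a)"
  using assms by (simp add: lin_ext_pCons lin_ext_add_fun lin_ext_tmult_left dm_eval_eq_lin_ext)

lemma lin_ext_bider_at_pow_mult:
  assumes "a \<in> Apoly q" "b \<in> Apoly q"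
  shows "lin_ext (bider_at_pow q phit psit w) (a * b)
    = tmult q (dm_eval q psit a) (lin_ext (bider_at_pow q phit psit w) b)
      + tmult q (lin_ext (bider_at_pow q phit psit w) a) (dm_eval q (phit :: 'k poly) b)"
  using assms(1)
proof (induct a rule: Apoly_induct)
  case 0
  then show ?case by simp
next
  case (pCons c a)
  let ?D = "lin_ext (bider_at_pow q phit psit w)"
  have "a * b \<in> Apoly q"
    using pCons(2) assms(2) by (rule Apoly_mult)
  then have "?D (pCons c a * b)
      = smult c (?D b) + tmult q psit (?D (a * b)) + tmult q w (dm_eval q phit (a * b))"
    by (simp add: lin_ext_add lin_ext_smult lin_ext_bider_at_pow_pCons add.assoc)
  moreover have "tmult q psit (tmult q (dm_eval q psit a) X)
      = tmult q (dm_eval q psit a) (tmult q psit X)" for X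
    using dm_eval_commute[OF pCons(2)] by (simp flip: tmult_assoc)
  ultimately show ?case
    using pCons(2,3) assms(2)
    by (simp add: dm_eval_pCons dm_eval_mult lin_ext_bider_at_pow_pCons tmult_add_right
        tmult_add_left tmult_smult_left tmult_assoc algebra_simps)
qed

lemma bider_of_in_Der: "bider_of q phit psit w \<in> Der q phit (psit :: 'k poly)"
  unfolding Der_def bider_of_def
  by (auto simp: Apoly_add Apoly_smult Apoly_mult lin_ext_add lin_ext_smult lin_ext_bider_at_pow_mult)

lemma bider_of_tvar [simp]: "bider_of q phit psit w tvar = (w :: 'k poly)"
  by (simp add: bider_of_def) (simp add: tvar_def lin_ext_pCons lin_ext_1 flip: one_pCons)

lemma inner_at_t_add:
  "inner_at_t q phit psit (U + V) = inner_at_t q phit psit U + inner_at_t q phit (psit :: 'k poly) V"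
  by (simp add: inner_at_t_def tmult_add_left tmult_add_right)

lemma inner_at_t_diff:
  "inner_at_t q phit psit (U - V) = inner_at_t q phit psit U - inner_at_t q phit (psit :: 'k poly) V"
  by (simp add: inner_at_t_def tmult_diff_left tmult_diff_right)

lemma inner_at_t_smult:
  "c \<in> Fq q \<Longrightarrow> inner_at_t q phit psit (smult c U) = smult c (inner_at_t q phit (psit :: 'k poly) U)"
  by (simp add: inner_at_t_def tmult_smult_left tmult_smult_right Fq_def smult_diff_right)

lemma inner_at_t_division:
  assumes "degree psit < degree (phit :: 'k poly)"
  shows "\<exists>U. degree (w - inner_at_t q phit psit U) < degree phit"
proof (induct "degree w" arbitrary: w rule: less_induct)
  case less
  show ?case
  proof (cases "degree w < degree phit")
    case True
    then show ?thesis
      by (intro exI[of _ 0]) (simp add: inner_at_t_def)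
  next
    case False
    let ?k = "degree w - degree phit"
    have "phit \<noteq> 0" "w \<noteq> 0"
      using False assms by auto
    then have lc: "lead_coeff phit ^ (q ^ ?k) \<noteq> 0" "lead_coeff w \<noteq> 0"
      by simp_all
    define U0 where "U0 = monom (lead_coeff w / lead_coeff phit ^ (q ^ ?k)) ?k"
    have "U0 \<noteq> 0" "degree U0 = ?k" "lead_coeff U0 = lead_coeff w / lead_coeff phit ^ (q ^ ?k)"
      using lc by (simp_all add: U0_def degree_monom_eq)
    moreover have "?k + degree phit = degree w"
      using False by simp
    ultimately have top: "degree (inner_at_t q phit psit U0) = degree w"
        "coeff (inner_at_t q phit psit U0) (degree w) = lead_coeff w"
      using degree_inner_at_t[OF q_pos assms] coeff_inner_at_t_top[OF q_pos assms, of U0] lc by simp_all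
    let ?w' = "w - inner_at_t q phit psit U0"
    have "degree ?w' < degree w"
    proof (rule degree_lessI)
      show "?w' \<noteq> 0 \<or> 0 < degree w"
        using False assms by simp
      show "\<forall>j \<ge> degree w. coeff ?w' j = 0"
        using top by (auto simp: coeff_eq_0 le_less)
    qed
    then obtain U1 where "degree (?w' - inner_at_t q phit psit U1) < degree phit"
      using less by blast
    then show ?thesis
      by (intro exI[of _ "U0 + U1"]) (simp add: inner_at_t_add algebra_simps)
  qed
qed

lemma inner_at_t_eq_0:
  assumes "degree psit < degree (phit :: 'k poly)" "degree (inner_at_t q phit psit U) < degree phit"
  shows "U = 0"
  using degree_inner_at_t[OF q_pos assms(1)] assms(2) by fastforce


lemma diff_mem_range_inner_at_t:
  assumes "x \<in> range (inner_at_t q phit psit)" "y \<in> range (inner_at_t q phit (psit :: 'k poly))"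
  shows "x - y \<in> range (inner_at_t q phit psit)"
  using assms by (auto simp flip: inner_at_t_diff)

lemma ext_rel_iff:
  "(\<delta>1, \<delta>2) \<in> ext_rel q phit psit \<longleftrightarrow> \<delta>1 \<in> Der q phit psit \<and> \<delta>2 \<in> Der q phit psit \<and>
     \<delta>1 tvar - \<delta>2 tvar \<in> range (inner_at_t q phit (psit :: 'k poly))"
proof -
  let ?inner = "\<lambda>U a. if a \<in> Apoly q
    then tmult q U (dm_eval q phit a) - tmult q (dm_eval q psit a) U else 0"
  have inner_tvar: "?inner U tvar = inner_at_t q phit psit U" for U
    by (simp add: inner_at_t_def)
  have "(\<lambda>a. \<delta>1 a - \<delta>2 a) = ?inner U \<longleftrightarrow> \<delta>1 tvar - \<delta>2 tvar = inner_at_t q phit psit U"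
    if D1: "\<delta>1 \<in> Der q phit psit" and D2: "\<delta>2 \<in> Der q phit psit" for U
  proof
    show "\<delta>1 tvar - \<delta>2 tvar = inner_at_t q phit psit U" if "(\<lambda>a. \<delta>1 a - \<delta>2 a) = ?inner U"
      using fun_cong[OF that, of tvar] inner_tvar by simp
    have "?inner U \<in> Der q phit psit"
      using Der_in_subset_Der unfolding Der_in_def by blast
    then show "(\<lambda>a. \<delta>1 a - \<delta>2 a) = ?inner U" if "\<delta>1 tvar - \<delta>2 tvar = inner_at_t q phit psit U"
      using that inner_tvar by (intro Der_eqI[OF Der_diff[OF D1 D2]]) simp_all
  qed
  then show ?thesis
    unfolding ext_rel_def Der_in_def by (auto simp: image_def)
qed

lemma ext_class_eq:
  "ext_class q phit psit w
    = {\<delta> \<in> Der q phit psit. \<delta> tvar - w \<in> range (inner_at_t q phit (psit :: 'k poly))}"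
  unfolding ext_class_def ext_rel_iff
  by (auto intro!: bexI[of _ "bider_of q phit psit w"] bider_of_in_Der)

lemma ext_class_eq_Image:
  assumes "\<delta> \<in> Der q phit psit" "\<delta> tvar - w \<in> range (inner_at_t q phit (psit :: 'k poly))"
  shows "ext_class q phit psit w = ext_rel q phit psit `` {\<delta>}"
proof -
  have "\<delta>' tvar - w \<in> range (inner_at_t q phit psit)
      \<longleftrightarrow> \<delta> tvar - \<delta>' tvar \<in> range (inner_at_t q phit psit)" for \<delta>'
  proof
    assume "\<delta>' tvar - w \<in> range (inner_at_t q phit psit)"
    from diff_mem_range_inner_at_t[OF assms(2) this]
    show "\<delta> tvar - \<delta>' tvar \<in> range (inner_at_t q phit psit)"
      by simp
  next
    assume "\<delta> tvar - \<delta>' tvar \<in> range (inner_at_t q phit psit)"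
    from diff_mem_range_inner_at_t[OF assms(2) this]
    show "\<delta>' tvar - w \<in> range (inner_at_t q phit psit)"
      by simp
  qed
  then show ?thesis
    unfolding ext_class_eq Image_singleton ext_rel_iff using assms(1) by auto
qed

lemma Ext1_eq_image_ext_class:
  assumes "degree psit < degree (phit :: 'k poly)"
  shows "Ext1 q phit psit = ext_class q phit psit ` {w. degree w < degree phit}"
proof
  show "Ext1 q phit psit \<subseteq> ext_class q phit psit ` {w. degree w < degree phit}"
  proof
    fix X
    assume "X \<in> Ext1 q phit psit"
    then obtain \<delta> where \<delta>: "\<delta> \<in> Der q phit psit" and X: "X = ext_rel q phit psit `` {\<delta>}"
      unfolding Ext1_def quotient_def by blast
    obtain U where U: "degree (\<delta> tvar - inner_at_t q phit psit U) < degree phit"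
      using inner_at_t_division[OF assms] by blast
    have "X = ext_class q phit psit (\<delta> tvar - inner_at_t q phit psit U)"
      unfolding X by (rule ext_class_eq_Image[OF \<delta>, symmetric]) simp
    then show "X \<in> ext_class q phit psit ` {w. degree w < degree phit}"
      using U by blast
  qed
  show "ext_class q phit psit ` {w. degree w < degree phit} \<subseteq> Ext1 q phit psit"
  proof clarify
    fix w :: "'k poly"
    have "ext_class q phit psit w = ext_rel q phit psit `` {bider_of q phit psit w}"
      by (rule ext_class_eq_Image[OF bider_of_in_Der]) (simp add: rev_image_eqI[of 0] inner_at_t_def)
    then show "ext_class q phit psit w \<in> Ext1 q phit psit"
      unfolding Ext1_def using bider_of_in_Der by (auto intro: quotientI)
  qed
qed

lemma inj_on_ext_class:
  assumes "degree psit < degree (phit :: 'k poly)"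
  shows "inj_on (ext_class q phit psit) {w. degree w < degree phit}"
proof (rule inj_onI)
  fix w1 w2
  assume w: "w1 \<in> {w. degree w < degree phit}" "w2 \<in> {w. degree w < degree phit}"
    and eq: "ext_class q phit psit w1 = ext_class q phit psit w2"
  have "bider_of q phit psit w1 \<in> ext_class q phit psit w1"
    unfolding ext_class_eq by (simp add: bider_of_in_Der rev_image_eqI[of 0] inner_at_t_def)
  then have "bider_of q phit psit w1 \<in> ext_class q phit psit w2"
    by (simp only: eq)
  then have "w1 - w2 \<in> range (inner_at_t q phit psit)"
    unfolding ext_class_eq by simp
  then obtain U where U: "w1 - w2 = inner_at_t q phit psit U"
    by blast
  have "degree (w1 - w2) < degree phit"
    using w degree_diff_le[of w1 "degree phit - 1" w2] by fastforce
  then have "U = 0"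
    using inner_at_t_eq_0[OF assms] U by simp
  then show "w1 = w2"
    using U by (simp add: inner_at_t_def)
qed

lemma ext_class_smult_add:
  assumes "c \<in> Fq q" "\<delta>1 \<in> ext_class q phit psit w1" "\<delta>2 \<in> ext_class q phit (psit :: 'k poly) w2"
  shows "(\<lambda>a. smult c (\<delta>1 a) + \<delta>2 a) \<in> ext_class q phit psit (smult c w1 + w2)"
proof -
  obtain U1 U2 where D: "\<delta>1 \<in> Der q phit psit" "\<delta>2 \<in> Der q phit psit"
    and U: "\<delta>1 tvar - w1 = inner_at_t q phit psit U1" "\<delta>2 tvar - w2 = inner_at_t q phit psit U2"
    using assms(2,3) unfolding ext_class_eq by blast
  have "(smult c (\<delta>1 tvar) + \<delta>2 tvar) - (smult c w1 + w2) = inner_at_t q phit psit (smult c U1 + U2)"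
    using U assms(1) by (simp add: inner_at_t_add inner_at_t_smult smult_add_right algebra_simps
        flip: smult_diff_right)
  then show ?thesis
    unfolding ext_class_eq using Der_smult_add[OF assms(1) D] by auto
qed

end

theorem lemma3p1:
  fixes p e q :: nat and \<theta> :: "'k::field" and phit psit :: "'k poly"
  assumes "prime p" and "e \<ge> 1" and "q = p ^ e" and "CHAR('k) = p"
    and "card (Fq q :: 'k set) = q"
    and "drinfeld_module \<theta> phit" and "drinfeld_module \<theta> psit"
    and "degree phit > degree psit"
  shows "bij_betw (ext_class q phit psit) {w. degree w < degree phit} (Ext1 q phit psit)
    \<and> (\<forall>w1 w2 c \<delta>1 \<delta>2. degree w1 < degree phit \<longrightarrow> degree w2 < degree phit \<longrightarrow> c \<in> Fq q \<longrightarrow>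
         \<delta>1 \<in> ext_class q phit psit w1 \<longrightarrow> \<delta>2 \<in> ext_class q phit psit w2 \<longrightarrow>
         (\<lambda>a. smult c (\<delta>1 a) + \<delta>2 a) \<in> ext_class q phit psit (smult c w1 + w2))"
proof -
  have power_q_add: "(x + y) ^ q = x ^ q + y ^ q" for x y :: 'k
    using assms(1,3,4) by (intro freshmans_dream') auto
  have "bij_betw (ext_class q phit psit) {w. degree w < degree phit} (Ext1 q phit psit)"
    using inj_on_ext_class[OF power_q_add assms(8)] Ext1_eq_image_ext_class[OF power_q_add assms(8)]
    by (simp add: bij_betw_def)
  moreover note ext_class_smult_add[OF power_q_add]
  ultimately show ?thesis
    by blast
qed

end
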